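(* Let $d\ge1$ and $\theta\in[0,\pi)$. Let $a,b$ be independent $\chi_d$-distributed random variables, and let $W=\sqrt{a^2+b^2+2ab\cos\theta}$ (equivalently, $W=\|\boldsymbol{w}_i+\boldsymbol{w}_j\|_2$ for random vectors $\boldsymbol{w}_i,\boldsymbol{w}_j\in\mathbb{R}^d$ with independent $\chi_d$-distributed norms $a,b$ conditioned to subtend the fixed angle $\theta$). Then $W$ has probability density, for $w\ge0$, $$p_\theta(w)=\frac{w^{2d-1}}{2^{d-2}\Gamma(\frac d2)^2}\int_{0}^{\pi/2}(\sin\phi\cos\phi)^{d-1}\frac{\exp\!\Big(-\frac{w^2}{2(1+\sin2\phi\cos\theta)}\Big)}{(1+\sin2\phi\cos\theta)^{d}}\,\mathrm{d}\phi.$$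
   Context: The $\chi_d$ distribution is the law of the Euclidean norm of a $\mathcal{N}(0,\mathbf{I}_d)$ vector, with density $\frac{x^{d-1}e^{-x^2/2}}{2^{d/2-1}\Gamma(d/2)}$ on $x\ge0$. *)

theory Defs
  imports "HOL-Probability.Probability"
begin

definition chi_density :: "nat \<Rightarrow> real \<Rightarrow> real" where
  "chi_density d x =
     (if 0 \<le> x then x ^ (d - 1) * exp (- (x\<^sup>2) / 2) / (2 powr (real d / 2 - 1) * Gamma (real d / 2))
      else 0)"

definition p_theta :: "nat \<Rightarrow> real \<Rightarrow> real \<Rightarrow> real" where
  "p_theta d \<theta> w =
     (if 0 \<le> w then
        w ^ (2 * d - 1) / (2 powr (real d - 2) * (Gamma (real d / 2))\<^sup>2) *
        (LBINT \<phi>=0..pi/2. (sin \<phi> * cos \<phi>) ^ (d - 1) *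
            exp (- (w\<^sup>2) / (2 * (1 + sin (2 * \<phi>) * cos \<theta>))) /
            (1 + sin (2 * \<phi>) * cos \<theta>) ^ d)
      else 0)"

end

theory Submission
  imports Defs
begin

(* Write t = cos \<theta> > -1 and test the law of W against a function h. In the integral of h W
   against the product of the two chi densities, substitute y = x u and then
   x = w / sqrt (1 + u\<^sup>2 + 2 u t), so that W = w: both are one-dimensional scalings, separated by
   Tonelli. The integrand becomes w^(2d-1) h w times a function of (w, u), and u = tan \<phi> turns
   its u-integral into the angular integral defining p_theta. *)

lemma indep_var_lborel_iff_borel:
  fixes X Y :: "'a \<Rightarrow> real"
  assumes "prob_space M"
  shows "prob_space.indep_var M lborel X lborel Y \<longleftrightarrow> prob_space.indep_var M borel X borel Y"
proof -
  have "sets (case_bool lborel lborel i) = sets (case_bool borel borel i :: real measure)"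
    "measurable M (case_bool lborel lborel i) = measurable M (case_bool borel borel i :: real measure)"
    for i by (simp_all split: bool.split)
  then show ?thesis
    by (simp only: prob_space.indep_var_def[OF assms] prob_space.indep_vars_def[OF assms])
qed

lemma distributed_image:
  assumes X: "distributed M N X g" and [measurable]: "F \<in> N \<rightarrow>\<^sub>M K"
    and [measurable]: "p \<in> borel_measurable K"
    and law: "\<And>A. A \<in> sets K \<Longrightarrow>
      (\<integral>\<^sup>+x. g x * indicator A (F x) \<partial>N) = (\<integral>\<^sup>+y. p y * indicator A y \<partial>K)"
  shows "distributed M K (\<lambda>\<omega>. F (X \<omega>)) p"
proof -
  have [measurable]: "X \<in> M \<rightarrow>\<^sub>M N" "g \<in> borel_measurable N"
    using X by (simp_all add: distributed_def)
  have "distr M K (\<lambda>\<omega>. F (X \<omega>)) = distr (density N g) K F"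
    using distr_distr[of F N K X M] distributed_distr_eq_density[OF X] by (simp add: comp_def)
  also have "\<dots> = density K p"
  proof (rule measure_eqI)
    fix A assume "A \<in> sets (distr (density N g) K F)"
    then have [measurable]: "A \<in> sets K" by simp
    have "emeasure (distr (density N g) K F) A = (\<integral>\<^sup>+x. g x * indicator A (F x) \<partial>N)"
      by (auto simp: emeasure_distr emeasure_density intro!: nn_integral_cong split: split_indicator)
    also have "\<dots> = emeasure (density K p) A"
      by (simp add: law emeasure_density)
    finally show "emeasure (distr (density N g) K F) A = emeasure (density K p) A" .
  qed simp
  finally show ?thesis by (simp add: distributed_def)
qed

lemma ennreal_mult_indicator: "ennreal (c * indicator A x) = ennreal c * indicator A x"
  by (simp split: split_indicator)

lemma nn_integral_tan_substitution_Icc: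
  fixes G :: "real \<Rightarrow> real"
  assumes [measurable]: "G \<in> borel_measurable borel" and "0 \<le> b" "b < pi/2"
  shows "(\<integral>\<^sup>+u. ennreal (G u) * indicator {0..tan b} u \<partial>lborel)
       = (\<integral>\<^sup>+\<phi>. ennreal (G (tan \<phi>) / (cos \<phi>)\<^sup>2) * indicator {0..b} \<phi> \<partial>lborel)"
proof -
  have cos_pos: "cos x > 0" if "x \<in> {0..b}" for x
    using that assms(2,3) by (intro cos_gt_zero_pi) auto
  have "(\<integral>\<^sup>+u. ennreal (G u * indicator {tan 0..tan b} u) \<partial>lborel)
     = (\<integral>\<^sup>+\<phi>. ennreal (G (tan \<phi>) * inverse ((cos \<phi>)\<^sup>2) * indicator {0..b} \<phi>) \<partial>lborel)"
  proof (rule nn_integral_substitution)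
    show "(tan has_real_derivative inverse ((cos x)\<^sup>2)) (at x)" if "x \<in> {0..b}" for x
      using cos_pos[OF that] by (intro DERIV_tan) auto
    show "continuous_on {0..b} (\<lambda>x. inverse ((cos x)\<^sup>2))"
      using cos_pos by (intro continuous_intros) force
  qed (use assms(2) in \<open>auto simp: set_borel_measurable_def\<close>)
  also have "\<dots> = (\<integral>\<^sup>+\<phi>. ennreal (G (tan \<phi>) / (cos \<phi>)\<^sup>2) * indicator {0..b} \<phi> \<partial>lborel)"
    by (intro nn_integral_cong) (simp add: divide_inverse split: split_indicator)
  finally show ?thesis
    by (simp add: ennreal_mult_indicator)
qed

lemma atLeastLessThan_pi_half_eq_UN_arctan: "{0..<pi/2} = (\<Union>n. {0..arctan (real n)})"
proof (intro equalityI subsetI)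
  fix x assume x: "x \<in> {0..<pi/2}"
  obtain n :: nat where "tan x \<le> real n"
    using real_arch_simple by blast
  then have "arctan (tan x) \<le> arctan (real n)"
    by (simp add: arctan_le_iff)
  with x show "x \<in> (\<Union>n. {0..arctan (real n)})"
    by (auto simp: arctan_tan)
next
  fix x assume "x \<in> (\<Union>n. {0..arctan (real n)})"
  then obtain n where "0 \<le> x" "x \<le> arctan (real n)" by auto
  with arctan_ubound[of "real n"] show "x \<in> {0..<pi/2}" by simp
qed

lemma nn_integral_tan_substitution:
  fixes G :: "real \<Rightarrow> real"
  assumes [measurable]: "G \<in> borel_measurable borel"
  shows "(\<integral>\<^sup>+u. ennreal (G u) * indicator {0..} u \<partial>lborel)
       = (\<integral>\<^sup>+\<phi>. ennreal (G (tan \<phi>) / (cos \<phi>)\<^sup>2) * indicator {0..<pi/2} \<phi> \<partial>lborel)"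
proof -
  have [measurable]: "(\<lambda>\<phi>. G (tan \<phi>) / (cos \<phi>)\<^sup>2) \<in> borel_measurable borel"
    unfolding tan_def by measurable
  let ?\<mu> = "density lborel (\<lambda>u. ennreal (G u))"
  let ?\<nu> = "density lborel (\<lambda>\<phi>. ennreal (G (tan \<phi>) / (cos \<phi>)\<^sup>2))"
  have "{0..} = (\<Union>n. {0..tan (arctan (real n))})"
    by (auto simp: tan_arctan) (meson real_arch_simple)
  then have "emeasure ?\<mu> {0..} = (SUP n. emeasure ?\<mu> {0..tan (arctan (real n))})"
    by (simp only:) (rule SUP_emeasure_incseq[symmetric], auto simp: incseq_def tan_arctan)
  also have "\<dots> = (SUP n. emeasure ?\<nu> {0..arctan (real n)})"
    using arctan_ubound
    by (intro SUP_cong refl) (simp add: emeasure_density nn_integral_tan_substitution_Icc)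
  also have "\<dots> = emeasure ?\<nu> {0..<pi/2}"
    unfolding atLeastLessThan_pi_half_eq_UN_arctan
    by (rule SUP_emeasure_incseq) (auto simp: incseq_def arctan_le_iff)
  finally show ?thesis
    by (simp add: emeasure_density)
qed

lemma nn_integral_eq_interval_integral:
  fixes f :: "real \<Rightarrow> real"
  assumes "a \<le> b" and cont: "continuous_on {a..b} f" and nonneg: "\<And>x. x \<in> {a..b} \<Longrightarrow> 0 \<le> f x"
  shows "(\<integral>\<^sup>+x. ennreal (f x) * indicator {a..b} x \<partial>lborel) = ennreal (LBINT x=a..b. f x)"
proof -
  have "(\<integral>\<^sup>+x. ennreal (f x) * indicator {a..b} x \<partial>lborel) = ennreal (integral {a..b} f)"
    using nonneg integrable_integral[OF integrable_continuous_interval[OF cont]]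
    by (rule nn_integral_has_integral_lebesgue')
  also have "integral {a..b} f = (LBINT x=a..b. f x)"
    using assms(1) borel_integrable_atLeastAtMost'[OF cont] by (rule interval_integral_eq_integral[symmetric])
  finally show ?thesis .
qed

lemma one_plus_mult_pos:
  fixes s t :: real
  assumes "0 \<le> s" "s \<le> 1" "-1 < t"
  shows "0 < 1 + s * t"
proof -
  have "1 + s * t = (1 - s) + s * (1 + t)" by (simp add: algebra_simps)
  moreover have "0 < 1 - s \<or> 0 < s * (1 + t)" using assms by (cases "s = 1") auto
  ultimately show ?thesis using assms by (smt (verit) mult_nonneg_nonneg)
qed

lemma quadratic_form_pos:
  fixes t u :: real
  assumes "-1 < t" "0 \<le> u"
  shows "0 < 1 + u\<^sup>2 + 2 * u * t"
proof -
  have "1 + u\<^sup>2 + 2 * u * t = (1 - u)\<^sup>2 + 2 * u * (1 + t)" by (simp add: power2_eq_square algebra_simps)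
  moreover have "0 < (1 - u)\<^sup>2 \<or> 0 < 2 * u * (1 + t)" using assms by (cases "u = 1") auto
  ultimately show ?thesis using assms by (smt (verit) mult_nonneg_nonneg zero_le_power2)
qed

lemma angle_form_pos:
  fixes t \<phi> :: real
  assumes "-1 < t" "0 \<le> \<phi>" "\<phi> \<le> pi/2"
  shows "0 < 1 + sin (2 * \<phi>) * t"
  using assms by (intro one_plus_mult_pos) (auto intro: sin_ge_zero)

definition chi_weight :: "nat \<Rightarrow> real \<Rightarrow> real" where
  "chi_weight k x = (if 0 \<le> x then x ^ k * exp (- (x\<^sup>2) / 2) else 0)"

(* In the coordinates w = sqrt (x\<^sup>2 + y\<^sup>2 + 2xyt) and u = y/x, resp. u = tan \<phi>, the measure
   chi_weight k x * chi_weight k y dx dy on the open quadrant has density w^(2k+1) * slope_weight k t w u,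
   resp. w^(2k+1) * angle_weight k t w \<phi>. *)
definition slope_weight :: "nat \<Rightarrow> real \<Rightarrow> real \<Rightarrow> real \<Rightarrow> real" where
  "slope_weight k t w u =
     u ^ k / (1 + u\<^sup>2 + 2 * u * t) ^ Suc k * exp (- (w\<^sup>2) * (1 + u\<^sup>2) / (2 * (1 + u\<^sup>2 + 2 * u * t)))"

definition angle_weight :: "nat \<Rightarrow> real \<Rightarrow> real \<Rightarrow> real \<Rightarrow> real" where
  "angle_weight k t w \<phi> =
     (sin \<phi> * cos \<phi>) ^ k * exp (- (w\<^sup>2) / (2 * (1 + sin (2 * \<phi>) * t))) / (1 + sin (2 * \<phi>) * t) ^ Suc k"

lemma chi_weight_scaled_product:
  assumes "0 < x" "0 \<le> u"
  shows "x * (chi_weight k x * chi_weight k (x * u)) = x ^ (2 * k + 1) * u ^ k * exp (- (x\<^sup>2) * (1 + u\<^sup>2) / 2)"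
proof -
  have "exp (- (x\<^sup>2) / 2) * exp (- ((x * u)\<^sup>2) / 2) = exp (- (x\<^sup>2) * (1 + u\<^sup>2) / 2)"
    by (simp add: exp_add[symmetric] power_mult_distrib algebra_simps add_divide_distrib)
  moreover have "x ^ (2 * k + 1) = x * x ^ k * x ^ k" by (simp add: mult_2 power_add)
  ultimately show ?thesis
    using assms by (simp add: chi_weight_def power_mult_distrib ac_simps)
qed

lemma sqrt_quadratic_form_scaled:
  fixes x u t :: real
  assumes "0 < x" "0 \<le> 1 + u\<^sup>2 + 2 * u * t"
  shows "sqrt (x\<^sup>2 + (x * u)\<^sup>2 + 2 * x * (x * u) * t) = x * sqrt (1 + u\<^sup>2 + 2 * u * t)"
proof -
  have "x\<^sup>2 + (x * u)\<^sup>2 + 2 * x * (x * u) * t = x\<^sup>2 * (1 + u\<^sup>2 + 2 * u * t)"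
    by (simp add: algebra_simps power_mult_distrib power2_eq_square)
  then show ?thesis using assms by (simp add: real_sqrt_mult)
qed

lemma slope_weight_rescaled:
  assumes "0 < r" "r\<^sup>2 = 1 + u\<^sup>2 + 2 * u * t"
  shows "1 / r * ((w / r) ^ (2 * k + 1) * u ^ k * exp (- ((w / r)\<^sup>2) * (1 + u\<^sup>2) / 2))
       = w ^ (2 * k + 1) * slope_weight k t w u"
proof -
  have "- ((w / r)\<^sup>2) * (1 + u\<^sup>2) / 2 = - (w\<^sup>2) * (1 + u\<^sup>2) / (2 * r\<^sup>2)"
    using assms(1) by (simp add: power_divide field_simps)
  moreover have "(r\<^sup>2) ^ Suc k = r ^ (2 * k + 1) * r"
    by (simp add: power_mult[symmetric] mult_2 power_add power2_eq_square power_mult_distrib)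
  ultimately show ?thesis
    using assms by (simp add: slope_weight_def power_divide field_simps)
qed

lemma slope_weight_tan:
  assumes "0 < cos \<phi>"
  shows "slope_weight k t w (tan \<phi>) / (cos \<phi>)\<^sup>2 = angle_weight k t w \<phi>"
proof -
  let ?c = "cos \<phi>" and ?S = "1 + sin (2 * \<phi>) * t"
  have pyth: "(sin \<phi>)\<^sup>2 + ?c\<^sup>2 = 1" by simp
  have form: "1 + (tan \<phi>)\<^sup>2 + 2 * tan \<phi> * t = ?S / ?c\<^sup>2"
    unfolding sin_double using assms pyth by (simp add: tan_def field_simps power2_eq_square)
  have sec: "1 + (tan \<phi>)\<^sup>2 = 1 / ?c\<^sup>2"
    using assms pyth by (simp add: tan_def field_simps)
  have exponent: "- (w\<^sup>2) * (1 / ?c\<^sup>2) / (2 * (?S / ?c\<^sup>2)) = - (w\<^sup>2) / (2 * ?S)"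
    using assms by (cases "?S = 0") (simp_all add: field_simps)
  have factor: "(tan \<phi>) ^ k / (S / ?c\<^sup>2) ^ Suc k / ?c\<^sup>2 = (sin \<phi> * ?c) ^ k / S ^ Suc k" for S
  proof -
    have "(?c\<^sup>2) ^ Suc k = ?c ^ k * ?c ^ k * ?c\<^sup>2"
      by (simp add: power_mult_distrib power2_eq_square)
    then show ?thesis
      using assms by (simp add: tan_def power_divide power_mult_distrib field_simps)
  qed
  have "slope_weight k t w (tan \<phi>) / ?c\<^sup>2
      = (tan \<phi>) ^ k / (?S / ?c\<^sup>2) ^ Suc k / ?c\<^sup>2 * exp (- (w\<^sup>2) * (1 / ?c\<^sup>2) / (2 * (?S / ?c\<^sup>2)))"
    unfolding slope_weight_def form unfolding sec by (simp only: times_divide_eq_left)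
  then show ?thesis
    unfolding factor exponent angle_weight_def by simp
qed

lemma nn_integral_slope_weight:
  assumes "-1 < t"
  shows "(\<integral>\<^sup>+u. ennreal (slope_weight k t w u) * indicator {0..} u \<partial>lborel)
       = ennreal (LBINT \<phi>=0..pi/2. angle_weight k t w \<phi>)"
proof -
  have [measurable]: "slope_weight k t w \<in> borel_measurable borel"
    unfolding slope_weight_def by measurable
  have "(\<integral>\<^sup>+u. ennreal (slope_weight k t w u) * indicator {0..} u \<partial>lborel)
      = (\<integral>\<^sup>+\<phi>. ennreal (slope_weight k t w (tan \<phi>) / (cos \<phi>)\<^sup>2) * indicator {0..<pi/2} \<phi> \<partial>lborel)"
    by (rule nn_integral_tan_substitution) measurable
  also have "\<dots> = (\<integral>\<^sup>+\<phi>. ennreal (angle_weight k t w \<phi>) * indicator {0..pi/2} \<phi> \<partial>lborel)"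
  proof (intro nn_integral_cong_AE eventually_mono[OF AE_lborel_singleton[of "pi/2"]])
    fix \<phi> :: real assume "\<phi> \<noteq> pi/2"
    moreover have "0 < cos \<phi>" if "\<phi> \<in> {0..<pi/2}"
      using that by (intro cos_gt_zero_pi) auto
    ultimately show "ennreal (slope_weight k t w (tan \<phi>) / (cos \<phi>)\<^sup>2) * indicator {0..<pi/2} \<phi>
        = ennreal (angle_weight k t w \<phi>) * indicator {0..pi/2} \<phi>"
      by (auto simp: slope_weight_tan split: split_indicator)
  qed
  also have "\<dots> = ennreal (LBINT \<phi>=0..pi/2. angle_weight k t w \<phi>)"
  proof -
    have "continuous_on {0..pi/2} (angle_weight k t w)"
      unfolding angle_weight_def
      using angle_form_pos[OF assms] by (intro continuous_intros) force+
    moreover have "0 \<le> angle_weight k t w \<phi>" if "\<phi> \<in> {0..pi/2}" for \<phi>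
    proof -
      have "0 \<le> sin \<phi>" "0 \<le> cos \<phi>"
        using that by (auto intro!: sin_ge_zero cos_ge_zero)
      then show ?thesis
        using that angle_form_pos[OF assms, of \<phi>] by (simp add: angle_weight_def)
    qed
    ultimately show ?thesis
      using nn_integral_eq_interval_integral[of 0 "pi/2" "angle_weight k t w"] by (simp add: zero_ereal_def)
  qed
  finally show ?thesis .
qed

lemma nn_integral_chi_weight_slope:
  assumes "-1 < t" "0 < x" and [measurable]: "h \<in> borel_measurable borel"
  shows "(\<integral>\<^sup>+y. ennreal (chi_weight k x * chi_weight k y) * h (sqrt (x\<^sup>2 + y\<^sup>2 + 2 * x * y * t)) \<partial>lborel)
       = (\<integral>\<^sup>+u. ennreal (x ^ (2 * k + 1) * u ^ k * exp (- (x\<^sup>2) * (1 + u\<^sup>2) / 2)) * indicator {0..} u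
            * h (x * sqrt (1 + u\<^sup>2 + 2 * u * t)) \<partial>lborel)" (is "?lhs = _")
proof -
  have [measurable]: "chi_weight k \<in> borel_measurable borel"
    unfolding chi_weight_def by measurable
  have "?lhs = ennreal x * (\<integral>\<^sup>+u. ennreal (chi_weight k x * chi_weight k (x * u))
          * h (sqrt (x\<^sup>2 + (x * u)\<^sup>2 + 2 * x * (x * u) * t)) \<partial>lborel)"
    using nn_integral_real_affine[of "\<lambda>y. ennreal (chi_weight k x * chi_weight k y) * h (sqrt (x\<^sup>2 + y\<^sup>2 + 2 * x * y * t))" x 0]
      assms(2) by simp
  also have "\<dots> = (\<integral>\<^sup>+u. ennreal x * (ennreal (chi_weight k x * chi_weight k (x * u))
          * h (sqrt (x\<^sup>2 + (x * u)\<^sup>2 + 2 * x * (x * u) * t))) \<partial>lborel)"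
    by (rule nn_integral_cmult[symmetric]) measurable
  also have "\<dots> = (\<integral>\<^sup>+u. ennreal (x ^ (2 * k + 1) * u ^ k * exp (- (x\<^sup>2) * (1 + u\<^sup>2) / 2)) * indicator {0..} u
            * h (x * sqrt (1 + u\<^sup>2 + 2 * u * t)) \<partial>lborel)"
  proof (rule nn_integral_cong)
    fix u :: real
    show "ennreal x * (ennreal (chi_weight k x * chi_weight k (x * u)) * h (sqrt (x\<^sup>2 + (x * u)\<^sup>2 + 2 * x * (x * u) * t)))
        = ennreal (x ^ (2 * k + 1) * u ^ k * exp (- (x\<^sup>2) * (1 + u\<^sup>2) / 2)) * indicator {0..} u
            * h (x * sqrt (1 + u\<^sup>2 + 2 * u * t))"
    proof (cases "0 \<le> u")
      case True
      have weight: "ennreal x * ennreal (chi_weight k x * chi_weight k (x * u))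
          = ennreal (x ^ (2 * k + 1) * u ^ k * exp (- (x\<^sup>2) * (1 + u\<^sup>2) / 2))"
        using assms(2) True by (simp add: ennreal_mult'[symmetric] chi_weight_scaled_product)
      have root: "sqrt (x\<^sup>2 + (x * u)\<^sup>2 + 2 * x * (x * u) * t) = x * sqrt (1 + u\<^sup>2 + 2 * u * t)"
        using assms(2) quadratic_form_pos[OF assms(1) True] by (intro sqrt_quadratic_form_scaled) auto
      have "indicator {0..} u = (1 :: ennreal)"
        using True by simp
      then show ?thesis
        unfolding root weight[symmetric] by (simp only: mult_1_right mult.assoc)
    next
      case False
      with assms(2) show ?thesis
        by (simp add: chi_weight_def zero_le_mult_iff)
    qed
  qed
  finally show ?thesis .
qed

lemma nn_integral_slope_rescale:
  assumes "-1 < t" "0 \<le> u" and [measurable]: "h \<in> borel_measurable borel"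
  shows "(\<integral>\<^sup>+x. indicator {0<..} x * (ennreal (x ^ (2 * k + 1) * u ^ k * exp (- (x\<^sup>2) * (1 + u\<^sup>2) / 2))
            * h (x * sqrt (1 + u\<^sup>2 + 2 * u * t))) \<partial>lborel)
       = (\<integral>\<^sup>+w. indicator {0<..} w * (ennreal (w ^ (2 * k + 1) * slope_weight k t w u) * h w) \<partial>lborel)"
proof -
  define r where "r = sqrt (1 + u\<^sup>2 + 2 * u * t)"
  have r: "0 < r" "r\<^sup>2 = 1 + u\<^sup>2 + 2 * u * t"
    using quadratic_form_pos[OF assms(1,2)] by (auto simp: r_def)
  then have positive_part: "indicator {0<..} (w / r) = (indicator {0<..} w :: ennreal)" for w
    by (simp add: indicator_def zero_less_divide_iff)
  let ?A = "\<lambda>x. x ^ (2 * k + 1) * u ^ k * exp (- (x\<^sup>2) * (1 + u\<^sup>2) / 2)"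
  have "(\<integral>\<^sup>+x. indicator {0<..} x * (ennreal (?A x) * h (x * r)) \<partial>lborel)
      = ennreal (1 / r) * (\<integral>\<^sup>+w. indicator {0<..} w * (ennreal (?A (w / r)) * h w) \<partial>lborel)"
    using nn_integral_real_affine[of "\<lambda>x. indicator {0<..} x * (ennreal (?A x) * h (x * r))" "1 / r" 0] r(1)
    by (simp add: positive_part)
  also have "\<dots> = (\<integral>\<^sup>+w. ennreal (1 / r) * (indicator {0<..} w * (ennreal (?A (w / r)) * h w)) \<partial>lborel)"
    by (rule nn_integral_cmult[symmetric]) measurable
  also have "\<dots> = (\<integral>\<^sup>+w. indicator {0<..} w * (ennreal (w ^ (2 * k + 1) * slope_weight k t w u) * h w) \<partial>lborel)"
  proof (rule nn_integral_cong)
    fix w :: real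
    have "ennreal (1 / r) * ennreal (?A (w / r)) = ennreal (1 / r * ?A (w / r))"
      using r(1) by (intro ennreal_mult'[symmetric]) simp
    also have "\<dots> = ennreal (w ^ (2 * k + 1) * slope_weight k t w u)"
      unfolding slope_weight_rescaled[OF r] ..
    finally have weight: "ennreal (1 / r) * ennreal (?A (w / r)) = ennreal (w ^ (2 * k + 1) * slope_weight k t w u)" .
    show "ennreal (1 / r) * (indicator {0<..} w * (ennreal (?A (w / r)) * h w))
        = indicator {0<..} w * (ennreal (w ^ (2 * k + 1) * slope_weight k t w u) * h w)"
      unfolding weight[symmetric] by (simp only: mult_ac)
  qed
  finally show ?thesis
    unfolding r_def .
qed

lemma nn_integral_chi_weight_pair_slope_coordinates:
  assumes t: "-1 < t" and [measurable]: "h \<in> borel_measurable borel"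
  shows "(\<integral>\<^sup>+x. \<integral>\<^sup>+y. ennreal (chi_weight k x * chi_weight k y) * h (sqrt (x\<^sup>2 + y\<^sup>2 + 2 * x * y * t)) \<partial>lborel \<partial>lborel)
       = (\<integral>\<^sup>+w. \<integral>\<^sup>+u. indicator {0..} u * (indicator {0<..} w * (ennreal (w ^ (2 * k + 1) * slope_weight k t w u) * h w))
            \<partial>lborel \<partial>lborel)" (is "?lhs = _")
proof -
  define P where "P x u = indicator {0<..} x * (ennreal (x ^ (2 * k + 1) * u ^ k * exp (- (x\<^sup>2) * (1 + u\<^sup>2) / 2))
    * indicator {0..} u * h (x * sqrt (1 + u\<^sup>2 + 2 * u * t)))" for x u :: real
  define Q where "Q w u = indicator {0..} u * (indicator {0<..} w * (ennreal (w ^ (2 * k + 1) * slope_weight k t w u) * h w))"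
    for w u :: real
  have [measurable]: "case_prod P \<in> borel_measurable (lborel \<Otimes>\<^sub>M lborel)"
    unfolding P_def by measurable
  have [measurable]: "case_prod Q \<in> borel_measurable (lborel \<Otimes>\<^sub>M lborel)"
    unfolding Q_def slope_weight_def by measurable
  have "?lhs = (\<integral>\<^sup>+x. \<integral>\<^sup>+u. P x u \<partial>lborel \<partial>lborel)"
  \<comment> \<open>For k = 0 the inner integrand does not vanish at x = 0, so that null line is discarded.\<close>
  proof (rule nn_integral_cong_AE, rule eventually_mono[OF AE_lborel_singleton[of 0]])
    fix x :: real assume "x \<noteq> 0"
    then consider "0 < x" | "x < 0" by linarith
    then show "(\<integral>\<^sup>+y. ennreal (chi_weight k x * chi_weight k y) * h (sqrt (x\<^sup>2 + y\<^sup>2 + 2 * x * y * t)) \<partial>lborel)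
        = (\<integral>\<^sup>+u. P x u \<partial>lborel)"
    proof cases
      case 1
      then show ?thesis by (simp add: nn_integral_chi_weight_slope[OF t] P_def)
    next
      case 2
      then show ?thesis by (simp add: chi_weight_def P_def)
    qed
  qed
  also have "\<dots> = (\<integral>\<^sup>+u. \<integral>\<^sup>+x. P x u \<partial>lborel \<partial>lborel)"
    by (rule lborel_pair.Fubini'[symmetric]) measurable
  also have "\<dots> = (\<integral>\<^sup>+u. \<integral>\<^sup>+w. Q w u \<partial>lborel \<partial>lborel)"
  proof (rule nn_integral_cong)
    fix u :: real
    show "(\<integral>\<^sup>+x. P x u \<partial>lborel) = (\<integral>\<^sup>+w. Q w u \<partial>lborel)"
    proof (cases "0 \<le> u")
      case True
      then have u_indicator: "indicator {0..} u = (1 :: ennreal)" by simp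
      show ?thesis
        unfolding P_def Q_def u_indicator mult_1_left mult_1_right by (rule nn_integral_slope_rescale[OF t True]) measurable
    qed (simp add: P_def Q_def)
  qed
  also have "\<dots> = (\<integral>\<^sup>+w. \<integral>\<^sup>+u. Q w u \<partial>lborel \<partial>lborel)"
    by (rule lborel_pair.Fubini') measurable
  finally show ?thesis
    unfolding Q_def .
qed

lemma nn_integral_chi_weight_pair:
  assumes t: "-1 < t" and [measurable]: "h \<in> borel_measurable borel"
  shows "(\<integral>\<^sup>+x. \<integral>\<^sup>+y. ennreal (chi_weight k x * chi_weight k y) * h (sqrt (x\<^sup>2 + y\<^sup>2 + 2 * x * y * t)) \<partial>lborel \<partial>lborel)
       = (\<integral>\<^sup>+w. indicator {0<..} w * (ennreal (w ^ (2 * k + 1) * (LBINT \<phi>=0..pi/2. angle_weight k t w \<phi>)) * h w)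
            \<partial>lborel)"
  unfolding nn_integral_chi_weight_pair_slope_coordinates[OF assms]
proof (rule nn_integral_cong)
  fix w :: real
  show "(\<integral>\<^sup>+u. indicator {0..} u * (indicator {0<..} w * (ennreal (w ^ (2 * k + 1) * slope_weight k t w u) * h w)) \<partial>lborel)
      = indicator {0<..} w * (ennreal (w ^ (2 * k + 1) * (LBINT \<phi>=0..pi/2. angle_weight k t w \<phi>)) * h w)"
  proof (cases "0 < w")
    case True
    then have w_indicator: "indicator {0<..} w = (1 :: ennreal)" by simp
    have split_power: "ennreal (w ^ (2 * k + 1) * c) = ennreal (w ^ (2 * k + 1)) * ennreal c" for c
      using True by (intro ennreal_mult') simp
    have slope_measurable: "(\<lambda>u. ennreal (slope_weight k t w u) * indicator {0..} u) \<in> borel_measurable lborel"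
      unfolding slope_weight_def by measurable
    have "(\<integral>\<^sup>+u. indicator {0..} u * (indicator {0<..} w * (ennreal (w ^ (2 * k + 1) * slope_weight k t w u) * h w)) \<partial>lborel)
        = (\<integral>\<^sup>+u. (ennreal (w ^ (2 * k + 1)) * h w) * (ennreal (slope_weight k t w u) * indicator {0..} u) \<partial>lborel)"
      unfolding w_indicator split_power by (simp only: mult_1_left mult_ac)
    also have "\<dots> = ennreal (w ^ (2 * k + 1)) * h w * ennreal (LBINT \<phi>=0..pi/2. angle_weight k t w \<phi>)"
      by (simp only: nn_integral_cmult[OF slope_measurable] nn_integral_slope_weight[OF t])
    finally show ?thesis
      unfolding w_indicator split_power by (simp only: mult_1_left mult_ac)
  qed simp
qed

definition chi_norm :: "nat \<Rightarrow> real" where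
  "chi_norm d = 2 powr (real d / 2 - 1) * Gamma (real d / 2)"

lemma chi_norm_pos: "0 < d \<Longrightarrow> 0 < chi_norm d"
  by (simp add: chi_norm_def Gamma_real_pos)

lemma chi_weight_nonneg: "0 \<le> chi_weight k x"
  by (simp add: chi_weight_def)

lemma chi_density_eq: "chi_density (Suc k) x = chi_weight k x / chi_norm (Suc k)"
  by (simp add: chi_density_def chi_weight_def chi_norm_def)

lemma p_theta_eq:
  "p_theta (Suc k) \<theta> w =
     indicator {0<..} w * (w ^ (2 * k + 1) * (LBINT \<phi>=0..pi/2. angle_weight k (cos \<theta>) w \<phi>)) / (chi_norm (Suc k))\<^sup>2"
proof -
  have "2 powr (real (Suc k) - 2) = 2 powr (real (Suc k) / 2 - 1) * 2 powr (real (Suc k) / 2 - 1)"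
    by (simp add: powr_add[symmetric])
  then have "2 powr (real (Suc k) - 2) * (Gamma (real (Suc k) / 2))\<^sup>2 = (chi_norm (Suc k))\<^sup>2"
    by (simp add: chi_norm_def power2_eq_square)
  then show ?thesis
    by (auto simp: p_theta_def angle_weight_def indicator_def)
qed

lemma borel_measurable_angle_integral [measurable]:
  "(\<lambda>w. LBINT \<phi>=0..pi/2. angle_weight k t w \<phi>) \<in> borel_measurable borel"
  unfolding angle_weight_def interval_lebesgue_integral_def set_lebesgue_integral_def by measurable

lemma borel_measurable_p_theta: "p_theta d \<theta> \<in> borel_measurable borel"
  unfolding p_theta_def interval_lebesgue_integral_def set_lebesgue_integral_def by measurable

lemma nn_integral_chi_density_pair:
  assumes "1 \<le> d" "-1 < cos \<theta>" and [measurable]: "h \<in> borel_measurable borel"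
  shows "(\<integral>\<^sup>+z. ennreal (chi_density d (fst z)) * ennreal (chi_density d (snd z))
            * h (sqrt ((fst z)\<^sup>2 + (snd z)\<^sup>2 + 2 * fst z * snd z * cos \<theta>)) \<partial>(lborel \<Otimes>\<^sub>M lborel))
       = (\<integral>\<^sup>+w. ennreal (p_theta d \<theta> w) * h w \<partial>lborel)" (is "?lhs = _")
proof -
  obtain k where d: "d = Suc k" using assms(1) by (cases d) auto
  define c where "c = ennreal (1 / (chi_norm d)\<^sup>2)"
  define F where "F x y = ennreal (chi_weight k x * chi_weight k y) * h (sqrt (x\<^sup>2 + y\<^sup>2 + 2 * x * y * cos \<theta>))"
    for x y :: real
  have [measurable]: "chi_density d \<in> borel_measurable borel"
    unfolding chi_density_def by measurable
  have [measurable]: "chi_weight k \<in> borel_measurable borel"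
    unfolding chi_weight_def by measurable
  have [measurable]: "case_prod F \<in> borel_measurable (lborel \<Otimes>\<^sub>M lborel)"
    unfolding F_def by measurable
  have weights: "ennreal (chi_density d x) * ennreal (chi_density d y) = c * ennreal (chi_weight k x * chi_weight k y)"
    for x y
    using d chi_norm_pos[of d] unfolding c_def d chi_density_eq
    by (simp add: ennreal_mult[symmetric] chi_weight_nonneg power2_eq_square)
  have "?lhs = (\<integral>\<^sup>+x. \<integral>\<^sup>+y. c * F x y \<partial>lborel \<partial>lborel)"
    by (subst lborel.nn_integral_fst[symmetric]) (simp_all add: weights F_def mult.assoc, measurable)
  also have "\<dots> = c * (\<integral>\<^sup>+x. \<integral>\<^sup>+y. F x y \<partial>lborel \<partial>lborel)"
  proof -
    have "(\<integral>\<^sup>+y. c * F x y \<partial>lborel) = c * (\<integral>\<^sup>+y. F x y \<partial>lborel)" for x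
      by (rule nn_integral_cmult) measurable
    then show ?thesis
      by (simp only:) (rule nn_integral_cmult, measurable)
  qed
  also have "\<dots> = c * (\<integral>\<^sup>+w. indicator {0<..} w
            * (ennreal (w ^ (2 * k + 1) * (LBINT \<phi>=0..pi/2. angle_weight k (cos \<theta>) w \<phi>)) * h w) \<partial>lborel)"
    unfolding F_def by (simp only: nn_integral_chi_weight_pair[OF assms(2,3)])
  also have "\<dots> = (\<integral>\<^sup>+w. c * (indicator {0<..} w
            * (ennreal (w ^ (2 * k + 1) * (LBINT \<phi>=0..pi/2. angle_weight k (cos \<theta>) w \<phi>)) * h w)) \<partial>lborel)"
    by (rule nn_integral_cmult[symmetric]) measurable
  also have "\<dots> = (\<integral>\<^sup>+w. ennreal (p_theta d \<theta> w) * h w \<partial>lborel)"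
  proof (rule nn_integral_cong)
    fix w :: real
    show "c * (indicator {0<..} w * (ennreal (w ^ (2 * k + 1) * (LBINT \<phi>=0..pi/2. angle_weight k (cos \<theta>) w \<phi>)) * h w))
        = ennreal (p_theta d \<theta> w) * h w"
      unfolding c_def d p_theta_eq
      by (cases "0 < w") (simp_all add: ennreal_mult'[symmetric] mult.assoc[symmetric])
  qed
  finally show ?thesis .
qed

theorem lemma4p2:
  fixes M :: "'s measure" and d :: nat and \<theta> :: real and a b :: "'s \<Rightarrow> real"
  assumes "prob_space M"
    and "d \<ge> 1"
    and "0 \<le> \<theta>" and "\<theta> < pi"
    and "distributed M lborel a (\<lambda>x. ennreal (chi_density d x))"
    and "distributed M lborel b (\<lambda>x. ennreal (chi_density d x))"
    and "prob_space.indep_var M borel a borel b"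
  shows "distributed M lborel
           (\<lambda>\<omega>. sqrt ((a \<omega>)\<^sup>2 + (b \<omega>)\<^sup>2 + 2 * a \<omega> * b \<omega> * cos \<theta>))
           (\<lambda>w. ennreal (p_theta d \<theta> w))"
proof -
  interpret prob_space M by fact
  have cos_gt: "-1 < cos \<theta>"
    using cos_monotone_0_pi[of \<theta> pi] assms(3,4) by simp
  have joint: "distributed M (lborel \<Otimes>\<^sub>M lborel) (\<lambda>\<omega>. (a \<omega>, b \<omega>))
      (\<lambda>(x, y). ennreal (chi_density d x) * ennreal (chi_density d y))"
    using assms(5-7) by (intro distributed_joint_indep sigma_finite_lborel)
      (simp_all add: indep_var_lborel_iff_borel[OF assms(1)])
  have "distributed M lborel (\<lambda>\<omega>. (\<lambda>(x, y). sqrt (x\<^sup>2 + y\<^sup>2 + 2 * x * y * cos \<theta>)) (a \<omega>, b \<omega>))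
      (\<lambda>w. ennreal (p_theta d \<theta> w))"
  proof (rule distributed_image[OF joint])
    show "(\<lambda>w. ennreal (p_theta d \<theta> w)) \<in> borel_measurable lborel"
      using borel_measurable_p_theta by measurable
    show "(\<integral>\<^sup>+z. (case z of (x, y) \<Rightarrow> ennreal (chi_density d x) * ennreal (chi_density d y))
          * indicator A (case z of (x, y) \<Rightarrow> sqrt (x\<^sup>2 + y\<^sup>2 + 2 * x * y * cos \<theta>)) \<partial>(lborel \<Otimes>\<^sub>M lborel))
        = (\<integral>\<^sup>+w. ennreal (p_theta d \<theta> w) * indicator A w \<partial>lborel)" if "A \<in> sets lborel" for A
      using that nn_integral_chi_density_pair[OF assms(2) cos_gt, of "indicator A"] by (simp add: case_prod_beta)
  qed measurable
  then show ?thesis by simp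
qed

end
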